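(* Let $K\subset\mathbb{R}^d$ be a convex body and suppose there is a positive, locally finite Borel measure $\mu$ on $\mathbb{R}^d$ with $\mathbf{1}_K\ast\mu=\mathbf{1}_{K^c}$ a.e., where $K^c=\mathbb{R}^d\setminus K$. Let $x$ be a regular boundary point of $K$ with exterior normal unit vector $\xi$. Then $\mu(-S(K,-\xi)+x)\ge 1$.
   Context: A convex body is a compact convex set with nonempty interior. A boundary point is regular if $K$ has a unique support hyperplane there; its exterior normal unit vector $\xi$ satisfies $K\subset\{z:\langle z,\xi\rangle\le\langle x,\xi\rangle\}$. For a unit vector $\eta$, $S(K,\eta)$ denotes the support set of $K$ determined by $\eta$, i.e. the set of points of $K$ maximizing $\langle\cdot,\eta\rangle$. *)

theory Defs
  imports "HOL-Analysis.Analysis"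
begin

definition convex_body :: "'a::euclidean_space set \<Rightarrow> bool" where
  "convex_body K \<longleftrightarrow> convex K \<and> compact K \<and> interior K \<noteq> {}"

definition locally_finite_measure :: "'a::topological_space measure \<Rightarrow> bool" where
  "locally_finite_measure M \<longleftrightarrow>
     (\<forall>x. \<exists>U. open U \<and> x \<in> U \<and> emeasure M U < \<infinity>)"

definition exterior_normal :: "'a::euclidean_space set \<Rightarrow> 'a \<Rightarrow> 'a \<Rightarrow> bool" where
  "exterior_normal K x u \<longleftrightarrow> norm u = 1 \<and> (\<forall>z\<in>K. z \<bullet> u \<le> x \<bullet> u)"

definition regular_boundary_point :: "'a::euclidean_space set \<Rightarrow> 'a \<Rightarrow> bool" where
  "regular_boundary_point K x \<longleftrightarrow> x \<in> frontier K \<and> (\<exists>!u. exterior_normal K x u)"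

definition support_set :: "'a::euclidean_space set \<Rightarrow> 'a \<Rightarrow> 'a set" where
  "support_set K \<eta> = {y \<in> K. \<forall>z\<in>K. z \<bullet> \<eta> \<le> y \<bullet> \<eta>}"

definition indicator_conv :: "'a::euclidean_space set \<Rightarrow> 'a measure \<Rightarrow> 'a \<Rightarrow> ennreal" where
  "indicator_conv K M y = (\<integral>\<^sup>+ z. indicator K (y - z) \<partial>M)"

end

theory Submission
  imports Defs
begin

text \<open>
  Call \<open>y\<close> admissible if \<open>(\<one>\<^sub>K * \<mu>)(y) = \<one>\<^bsub>K\<^sup>c\<^esub>(y)\<close>; almost every \<open>y\<close> is. For
  admissible \<open>y\<close> the reflected translate \<open>y - K\<close> has measure \<open>1\<close> if \<open>y \<notin> K\<close> and measure \<open>0\<close>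
  if \<open>y \<in> K\<close>. The interiors of the null translates form an open \<open>\<mu>\<close>-null set \<open>N\<close>.
  Choosing admissible \<open>y\<^sub>n \<notin> K\<close> with \<open>y\<^sub>n \<rightarrow> x\<close>, the sets \<open>(y\<^sub>n - K) - N\<close> have measure \<open>1\<close> and
  lie in compact sets shrinking to \<open>(x - K) - N\<close>, so by local finiteness the latter has measure
  at least \<open>1\<close>. If \<open>x - k \<notin> N\<close>, then \<open>int K\<close> and \<open>(x - k) + int K\<close> are disjoint, since an
  admissible \<open>y\<close> in their intersection would put \<open>x - k\<close> into the interior of the null set
  \<open>y - K\<close>. A hyperplane separating them supports \<open>K\<close> at \<open>x\<close>, so by regularity its normal
  is \<open>\<xi>\<close>; it also shows that \<open>k\<close> minimises \<open>\<langle>\<cdot>, \<xi>\<rangle>\<close> on \<open>K\<close>, i.e. \<open>k \<in> S(K, -\<xi>)\<close>.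
\<close>

lemma AE_lborel_obtain_in_open:
  fixes U :: "'a::euclidean_space set"
  assumes "open U" "U \<noteq> {}" "AE y in lborel. P y"
  obtains y where "y \<in> U" "P y"
proof (rule ccontr)
  assume "\<not> thesis"
  with that have "AE y in lborel. y \<in> - U"
    using assms(3) by auto
  then have "AE y \<in> U in lebesgue. y \<in> - U"
    by (auto dest: AE_completion)
  moreover obtain u where "u \<in> U" using assms(2) by auto
  ultimately show False
    using mem_closed_if_AE_lebesgue_open[OF assms(1), of "- U"] assms(1) by auto
qed

lemma reflected_translate_eq:
  fixes S :: "'a::ab_group_add set"
  shows "(\<lambda>k. y - k) ` S = (+) y ` uminus ` S"
  by (simp add: image_image)

lemma interior_reflected_translate:
  fixes S :: "'a::euclidean_space set"
  shows "interior ((\<lambda>k. y - k) ` S) = (\<lambda>k. y - k) ` interior S"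
  by (simp only: reflected_translate_eq interior_translation interior_negations)

lemma closed_reflected_translate:
  fixes S :: "'a::real_normed_vector set"
  shows "closed S \<Longrightarrow> closed ((\<lambda>k. y - k) ` S)"
  by (simp only: reflected_translate_eq closed_translation closed_negations)

lemma indicator_conv_eq_emeasure:
  fixes K :: "'a::euclidean_space set"
  assumes "closed K" "sets \<mu> = sets borel"
  shows "indicator_conv K \<mu> y = emeasure \<mu> ((\<lambda>k. y - k) ` K)"
proof -
  have "indicator K (y - z) = (indicator ((\<lambda>k. y - k) ` K) z :: ennreal)" for z
    by (auto simp: indicator_def image_iff)
  moreover have "(\<lambda>k. y - k) ` K \<in> sets \<mu>"
    using closed_reflected_translate[OF assms(1)] assms(2) by simp
  ultimately show ?thesis
    unfolding indicator_conv_def by (simp add: nn_integral_indicator)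
qed

lemma locally_finite_emeasure_compact_less_top:
  fixes \<mu> :: "'a::t2_space measure"
  assumes "locally_finite_measure \<mu>" "sets \<mu> = sets borel" "compact C"
  shows "emeasure \<mu> C < \<infinity>"
proof -
  obtain U where U: "\<And>x. open (U x)" "\<And>x. x \<in> U x" "\<And>x. emeasure \<mu> (U x) < \<infinity>"
    using assms(1) unfolding locally_finite_measure_def by metis
  obtain F where F: "F \<subseteq> C" "finite F" "C \<subseteq> (\<Union>c\<in>F. U c)"
    using compactE_image[OF assms(3), of C U] U by blast
  have U_sets: "U c \<in> sets \<mu>" for c
    using U(1) assms(2) by simp
  have "emeasure \<mu> C \<le> emeasure \<mu> (\<Union>c\<in>F. U c)"
    using F U_sets by (intro emeasure_mono) auto
  also have "\<dots> \<le> (\<Sum>c\<in>F. emeasure \<mu> (U c))"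
    using U_sets by (intro emeasure_subadditive_finite F(2)) auto
  also have "\<dots> < \<infinity>"
    using F(2) U(3) by (simp add: less_top)
  finally show ?thesis .
qed

lemma emeasure_INT_decseq_compact_ge:
  fixes \<mu> :: "'a::t2_space measure"
  assumes "locally_finite_measure \<mu>" "sets \<mu> = sets borel"
    and "decseq C" "\<And>n. compact (C n)" "\<And>n. c \<le> emeasure \<mu> (C n)"
  shows "c \<le> emeasure \<mu> (\<Inter>n. C n)"
proof -
  have C_sets: "C n \<in> sets \<mu>" for n
    using assms(2,4) by (simp add: borel_compact)
  have "c \<le> (INF n. emeasure \<mu> (C n))"
    using assms(5) by (rule INF_greatest)
  also have "\<dots> = emeasure \<mu> (\<Inter>n. C n)"
    using locally_finite_emeasure_compact_less_top[OF assms(1,2,4), of 0]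
    by (intro INF_emeasure_decseq' C_sets assms(3)) (auto simp: less_top)
  finally show ?thesis .
qed

lemma null_sets_Union_open:
  fixes \<mu> :: "'a::second_countable_topology measure"
  assumes "\<And>U. U \<in> F \<Longrightarrow> open U" "F \<subseteq> null_sets \<mu>"
  shows "\<Union>F \<in> null_sets \<mu>"
proof -
  obtain F' where F': "F' \<subseteq> F" "countable F'" "\<Union>F' = \<Union>F"
    using Lindelof[of F] assms(1) by blast
  have "(\<Union>U\<in>F'. U) \<in> null_sets \<mu>"
    using F'(1) assms by (intro null_sets_UN' F'(2)) auto
  then show ?thesis using F'(3) by simp
qed

lemma convex_disjoint_interior_translate_separation:
  fixes K :: "'a::euclidean_space set"
  assumes "convex K" "closed K" "interior K \<noteq> {}"
    and "interior K \<inter> (+) v ` interior K = {}"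
  obtains u where "u \<noteq> 0" "\<And>a b. a \<in> K \<Longrightarrow> b \<in> K \<Longrightarrow> u \<bullet> a \<le> u \<bullet> (v + b)"
proof -
  obtain u c where u: "u \<noteq> 0" "\<forall>a\<in>interior K. u \<bullet> a \<le> c" "\<forall>w\<in>(+) v ` interior K. c \<le> u \<bullet> w"
    using separating_hyperplane_sets[of "interior K" "(+) v ` interior K"] assms
    by (auto simp: convex_interior convex_translation)
  have "interior K \<times> interior K \<subseteq> {(a, b). u \<bullet> a \<le> u \<bullet> (v + b)}"
    using u(2,3) by fastforce
  moreover have "closed {(a, b). u \<bullet> a \<le> u \<bullet> (v + b)}"
    unfolding case_prod_unfold by (intro closed_Collect_le continuous_intros)
  ultimately have "closure (interior K \<times> interior K) \<subseteq> {(a, b). u \<bullet> a \<le> u \<bullet> (v + b)}"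
    by (rule closure_minimal)
  moreover have "closure (interior K \<times> interior K) = K \<times> K"
    using assms(1-3) by (simp add: closure_Times convex_closure_interior)
  ultimately show ?thesis
    using that u(1) by blast
qed

lemma regular_boundary_point_normal_unique:
  assumes "regular_boundary_point K x" "exterior_normal K x \<xi>"
    and "u \<noteq> 0" "\<And>z. z \<in> K \<Longrightarrow> u \<bullet> z \<le> u \<bullet> x"
  shows "u = norm u *\<^sub>R \<xi>"
proof -
  have "exterior_normal K x (u /\<^sub>R norm u)"
    using assms(3,4) by (auto simp: exterior_normal_def divide_right_mono inner_commute)
  then have "u /\<^sub>R norm u = \<xi>"
    using assms(1,2) unfolding regular_boundary_point_def by blast
  then show ?thesis
    using assms(3) by auto
qed

lemma support_set_if_disjoint_interior_translate:
  fixes K :: "'a::euclidean_space set"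
  assumes "convex K" "closed K" "interior K \<noteq> {}"
    and "regular_boundary_point K x" "exterior_normal K x \<xi>"
    and "k \<in> K" "interior K \<inter> (+) (x - k) ` interior K = {}"
  shows "k \<in> support_set K (- \<xi>)"
proof -
  obtain u where u: "u \<noteq> 0" "\<And>a b. a \<in> K \<Longrightarrow> b \<in> K \<Longrightarrow> u \<bullet> a \<le> u \<bullet> (x - k + b)"
    using convex_disjoint_interior_translate_separation[OF assms(1-3,7)] by blast
  have "x \<in> K"
    using assms(2,4) by (auto simp: regular_boundary_point_def frontier_def)
  have "u = norm u *\<^sub>R \<xi>"
    using regular_boundary_point_normal_unique[OF assms(4,5) u(1)] u(2)[OF _ assms(6)]
    by (simp add: algebra_simps)
  moreover have "u \<bullet> k \<le> u \<bullet> b" if "b \<in> K" for b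
    using u(2)[OF \<open>x \<in> K\<close> that] by (simp add: inner_add_right inner_diff_right)
  ultimately have "\<xi> \<bullet> k \<le> \<xi> \<bullet> b" if "b \<in> K" for b
    using that u(1) by (metis inner_scaleR_left mult_le_cancel_left_pos zero_less_norm_iff)
  then show ?thesis
    using assms(6) by (auto simp: support_set_def inner_commute)
qed

lemma compact_support_set:
  fixes K :: "'a::euclidean_space set"
  assumes "compact K"
  shows "compact (support_set K \<eta>)"
proof -
  have "support_set K \<eta> = K \<inter> (\<Inter>z\<in>K. {y. z \<bullet> \<eta> \<le> y \<bullet> \<eta>})"
    by (auto simp: support_set_def)
  also have "compact \<dots>"
    using assms by (intro compact_Int_closed closed_INT) (auto intro!: closed_Collect_le continuous_intros)
  finally show ?thesis .
qed

definition null_translate_interiors :: "'a::euclidean_space set \<Rightarrow> 'a measure \<Rightarrow> 'a set" where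
  "null_translate_interiors K \<mu> =
     \<Union>{interior ((\<lambda>k. y - k) ` K) | y. (\<lambda>k. y - k) ` K \<in> null_sets \<mu>}"

lemma null_translate_interiors_null:
  assumes "sets \<mu> = sets borel"
  shows "null_translate_interiors K \<mu> \<in> null_sets \<mu>"
proof -
  have "interior ((\<lambda>k. y - k) ` K) \<in> null_sets \<mu>" if "(\<lambda>k. y - k) ` K \<in> null_sets \<mu>" for y
    by (rule null_sets_subset[OF that]) (simp_all add: assms interior_subset)
  then show ?thesis
    unfolding null_translate_interiors_def by (intro null_sets_Union_open) auto
qed

lemma open_null_translate_interiors: "open (null_translate_interiors K \<mu>)"
  unfolding null_translate_interiors_def by auto

lemma disjoint_interior_translate_if_not_in_null_translate_interiors:
  fixes K :: "'a::euclidean_space set"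
  assumes "closed K" "sets \<mu> = sets borel"
    and "AE y in lborel. indicator_conv K \<mu> y = indicator (UNIV - K) y"
    and "v \<notin> null_translate_interiors K \<mu>"
  shows "interior K \<inter> (+) v ` interior K = {}"
proof (rule ccontr)
  assume "interior K \<inter> (+) v ` interior K \<noteq> {}"
  then obtain y where y: "y \<in> interior K" "y \<in> (+) v ` interior K"
    and "indicator_conv K \<mu> y = indicator (UNIV - K) y"
    using AE_lborel_obtain_in_open[OF _ _ assms(3)] by (metis IntE open_Int open_interior open_translation)
  then have "emeasure \<mu> ((\<lambda>k. y - k) ` K) = 0"
    using interior_subset[of K] by (auto simp: indicator_conv_eq_emeasure[OF assms(1,2)])
  then have "(\<lambda>k. y - k) ` K \<in> null_sets \<mu>"
    using closed_reflected_translate[OF assms(1)] assms(2) by auto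
  moreover have "v \<in> interior ((\<lambda>k. y - k) ` K)"
    using y(2) by (auto simp: interior_reflected_translate)
  ultimately have "v \<in> null_translate_interiors K \<mu>"
    unfolding null_translate_interiors_def by blast
  with assms(4) show False ..
qed

lemma one_le_emeasure_differences_near_boundary:
  fixes K :: "'a::euclidean_space set"
  assumes "compact K" "sets \<mu> = sets borel"
    and "AE y in lborel. indicator_conv K \<mu> y = indicator (UNIV - K) y"
    and "x \<in> frontier K" "r > 0"
  shows "1 \<le> emeasure \<mu> ({y - k | y k. y \<in> cball x r \<and> k \<in> K} - null_translate_interiors K \<mu>)"
proof -
  let ?N = "null_translate_interiors K \<mu>"
  have "closed K"
    using assms(1) by (rule compact_imp_closed)
  obtain w where "w \<notin> K" "dist x w < r"
    using assms(4,5) unfolding frontier_straddle by blast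
  then have "ball x r - K \<noteq> {}"
    by auto
  moreover have "open (ball x r - K)"
    using \<open>closed K\<close> by auto
  ultimately obtain y where y: "y \<in> ball x r" "y \<notin> K"
    and "indicator_conv K \<mu> y = indicator (UNIV - K) y"
    using AE_lborel_obtain_in_open[OF _ _ assms(3)] by blast
  then have "1 = emeasure \<mu> ((\<lambda>k. y - k) ` K)"
    by (simp add: indicator_conv_eq_emeasure[OF \<open>closed K\<close> assms(2)])
  also have "\<dots> = emeasure \<mu> ((\<lambda>k. y - k) ` K - ?N)"
    using closed_reflected_translate[OF \<open>closed K\<close>] assms(2)
    by (intro emeasure_Diff_null_set[symmetric] null_translate_interiors_null) auto
  also have "\<dots> \<le> emeasure \<mu> ({y - k | y k. y \<in> cball x r \<and> k \<in> K} - ?N)"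
  proof (rule emeasure_mono)
    show "(\<lambda>k. y - k) ` K - ?N \<subseteq> {y - k | y k. y \<in> cball x r \<and> k \<in> K} - ?N"
      using y(1) by fastforce
    have "compact ({y - k | y k. y \<in> cball x r \<and> k \<in> K} - ?N)"
      by (intro compact_diff compact_differences compact_cball assms(1) open_null_translate_interiors)
    then show "{y - k | y k. y \<in> cball x r \<and> k \<in> K} - ?N \<in> sets \<mu>"
      using assms(2) by (simp add: borel_compact)
  qed
  finally show ?thesis .
qed

lemma INT_differences_shrinking_cball_subset:
  fixes K :: "'a::real_normed_vector set"
  assumes "closed K"
  shows "(\<Inter>n. {y - k | y k. y \<in> cball x (1 / Suc n) \<and> k \<in> K}) \<subseteq> (\<lambda>k. x - k) ` K"
proof
  fix z assume z: "z \<in> (\<Inter>n. {y - k | y k. y \<in> cball x (1 / Suc n) \<and> k \<in> K})"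
  have "\<exists>k\<in>K. dist k (x - z) < e" if "e > 0" for e
  proof -
    obtain n :: nat where n: "1 / Suc n < e"
      using \<open>e > 0\<close> nat_approx_posE by blast
    obtain y k where yk: "y \<in> cball x (1 / Suc n)" "k \<in> K" "z = y - k"
      using z by blast
    have "dist k (x - z) = dist x y"
      by (simp add: yk(3) dist_norm algebra_simps norm_minus_commute)
    with yk(1) n have "dist k (x - z) < e"
      by simp
    with yk(2) show ?thesis ..
  qed
  then have "x - z \<in> K"
    using closed_approachable[OF assms] by blast
  then show "z \<in> (\<lambda>k. x - k) ` K"
    by (auto simp: image_iff intro!: bexI[of _ "x - z"])
qed

lemma one_le_emeasure_reflected_translate_diff_null:
  fixes K :: "'a::euclidean_space set"
  assumes "compact K" "sets \<mu> = sets borel" "locally_finite_measure \<mu>"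
    and "AE y in lborel. indicator_conv K \<mu> y = indicator (UNIV - K) y"
    and "x \<in> frontier K"
  shows "1 \<le> emeasure \<mu> ((\<lambda>k. x - k) ` K - null_translate_interiors K \<mu>)"
proof -
  let ?N = "null_translate_interiors K \<mu>"
  define D where "D n = {y - k | y k. y \<in> cball x (1 / Suc n) \<and> k \<in> K}" for n :: nat
  have "decseq (\<lambda>n. D n - ?N)"
  proof (rule decseq_SucI)
    fix n
    have "cball x (1 / Suc (Suc n)) \<subseteq> cball x (1 / Suc n)"
      by (intro subset_cball) (simp add: frac_le)
    then show "D (Suc n) - ?N \<subseteq> D n - ?N"
      unfolding D_def by blast
  qed
  moreover have "compact (D n - ?N)" for n
    unfolding D_def
    by (intro compact_diff compact_differences compact_cball assms(1) open_null_translate_interiors)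
  moreover have "1 \<le> emeasure \<mu> (D n - ?N)" for n
    unfolding D_def by (intro one_le_emeasure_differences_near_boundary assms(1,2,4,5)) simp
  ultimately have "1 \<le> emeasure \<mu> (\<Inter>n. D n - ?N)"
    by (rule emeasure_INT_decseq_compact_ge[OF assms(3,2)])
  also have "\<dots> \<le> emeasure \<mu> ((\<lambda>k. x - k) ` K - ?N)"
  proof (rule emeasure_mono)
    have "(\<Inter>n. D n) \<subseteq> (\<lambda>k. x - k) ` K"
      unfolding D_def by (rule INT_differences_shrinking_cball_subset[OF compact_imp_closed[OF assms(1)]])
    then show "(\<Inter>n. D n - ?N) \<subseteq> (\<lambda>k. x - k) ` K - ?N"
      by blast
    have "compact ((\<lambda>k. x - k) ` K)"
      using assms(1) by (intro compact_continuous_image continuous_intros)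
    then have "compact ((\<lambda>k. x - k) ` K - ?N)"
      by (intro compact_diff open_null_translate_interiors)
    then show "(\<lambda>k. x - k) ` K - ?N \<in> sets \<mu>"
      using assms(2) by (simp add: borel_compact)
  qed
  finally show ?thesis .
qed

lemma reflected_translate_diff_null_subset_support_set:
  fixes K :: "'a::euclidean_space set"
  assumes "convex K" "closed K" "interior K \<noteq> {}" "sets \<mu> = sets borel"
    and "AE y in lborel. indicator_conv K \<mu> y = indicator (UNIV - K) y"
    and "regular_boundary_point K x" "exterior_normal K x \<xi>"
  shows "(\<lambda>k. x - k) ` K - null_translate_interiors K \<mu> \<subseteq> (\<lambda>s. x - s) ` support_set K (- \<xi>)"
proof clarify
  fix k assume "k \<in> K" "x - k \<notin> null_translate_interiors K \<mu>"
  then have "interior K \<inter> (+) (x - k) ` interior K = {}"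
    by (intro disjoint_interior_translate_if_not_in_null_translate_interiors[OF assms(2,4,5)])
  with \<open>k \<in> K\<close> have "k \<in> support_set K (- \<xi>)"
    by (rule support_set_if_disjoint_interior_translate[OF assms(1-3,6,7)])
  then show "x - k \<in> (\<lambda>s. x - s) ` support_set K (- \<xi>)"
    by blast
qed

theorem lemma4p4:
  fixes K :: "'a::euclidean_space set" and \<mu> :: "'a measure" and x \<xi> :: 'a
  assumes "convex_body K"
    and "sets \<mu> = sets borel"
    and "locally_finite_measure \<mu>"
    and "AE y in lborel. indicator_conv K \<mu> y = indicator (UNIV - K) y"
    and "regular_boundary_point K x"
    and "exterior_normal K x \<xi>"
  shows "emeasure \<mu> ((\<lambda>s. x - s) ` support_set K (- \<xi>)) \<ge> 1"
proof -
  have K: "compact K" "convex K" "interior K \<noteq> {}"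
    using assms(1) by (auto simp: convex_body_def)
  have "x \<in> frontier K"
    using assms(5) by (simp add: regular_boundary_point_def)
  then have "1 \<le> emeasure \<mu> ((\<lambda>k. x - k) ` K - null_translate_interiors K \<mu>)"
    by (rule one_le_emeasure_reflected_translate_diff_null[OF K(1) assms(2-4)])
  also have "\<dots> \<le> emeasure \<mu> ((\<lambda>s. x - s) ` support_set K (- \<xi>))"
  proof (rule emeasure_mono)
    show "(\<lambda>k. x - k) ` K - null_translate_interiors K \<mu> \<subseteq> (\<lambda>s. x - s) ` support_set K (- \<xi>)"
      using K by (intro reflected_translate_diff_null_subset_support_set compact_imp_closed assms(2,4-6))
    show "(\<lambda>s. x - s) ` support_set K (- \<xi>) \<in> sets \<mu>"
      using compact_support_set[OF K(1)] assms(2)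
      by (simp add: borel_compact compact_continuous_image continuous_intros)
  qed
  finally show ?thesis .
qed

end
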